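(* A random permutation $\boldsymbol\pi\in\mathcal S_n$ is exchangeable if and only if its distribution is determined by a collection of functions of the form $$p(\pi)=p^{(n)}_k(n_1,\dots,n_k)=\frac{1}{\prod_{j=1}^k(n_j-1)!}\varphi^{(n)}_k(n_1,\dots,n_k)$$ for any $k\in[n]$, where $(\varphi^{(m)})_{m\geq1}$ is an EPPF and $(n_1,\dots,n_k)$ are the cycle lengths of $\pi$.
   Context: $\mathcal S_n$ is the symmetric group on $[n]=\{1,\dots,n\}$. The cycle type of $\pi\in\mathcal S_n$ is $\mathrm{t}(\pi)=(t_1(\pi),\dots,t_n(\pi))$, $t_i(\pi)$ being the number of cycles of length $i$. A random permutation $\boldsymbol\pi\in\mathcal S_n$ is finitely exchangeable if $P(\boldsymbol\pi=\pi)=P(\boldsymbol\pi=\pi')$ whenever $\mathrm{t}(\pi)=\mathrm{t}(\pi')$. The deletion map $\operatorname{del}:\mathcal S_{n+1}\to\mathcal S_n$ removes $n+1$ from the cycle representation: $\operatorname{del}(\sigma)(i)=\sigma(i)$ if $i\neq\sigma^{-1}(n+1)$, and $\operatorname{del}(\sigma)(i)=\sigma(n+1)$ if $i=\sigma^{-1}(n+1)$. A sequence $(\boldsymbol\pi_m)_{m\geq1}$, $\boldsymbol\pi_m\in\mathcal S_m$ with law $\mathcal L_m$, is consistent if $\operatorname{del}(\boldsymbol\pi_{m+1})\sim\mathcal L_m$ for all $m$. A random permutation $\boldsymbol\pi\in\mathcal S_n$ is exchangeable if there is a consistent sequence $(\boldsymbol\pi^\star_m)_{m\geq1}$ of finitely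 exchangeable random permutations with $\boldsymbol\pi^\star_n\overset{d}{=}\boldsymbol\pi$. An EPPF (exchangeable partition probability function) is a collection $(\varphi^{(n)})_{n\ge1}$ of symmetric functions $\varphi^{(n)}_k(n_1,\dots,n_k)$, $\sum_j n_j=n$, giving the probability of a given partition of $[n]$ into $k$ blocks of sizes $n_1,\dots,n_k$ under an exchangeable random partition, and satisfying $\varphi^{(1)}_1(1)=1$ and $\varphi_k^{(n)}(n_1,\dots,n_k)=\sum_{j=1}^k\varphi_k^{(n+1)}(n_1,\dots,n_j+1,\dots,n_k)+\varphi_{k+1}^{(n+1)}(n_1,\dots,n_k,1)$. *)

theory Defs
  imports "HOL-Probability.Probability_Mass_Function" "HOL-Combinatorics.Permutations"
begin

definition perm_cycle :: "(nat \<Rightarrow> nat) \<Rightarrow> nat \<Rightarrow> nat set" where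
  "perm_cycle \<pi> x = {(\<pi> ^^ k) x | k. True}"

definition cycles :: "nat \<Rightarrow> (nat \<Rightarrow> nat) \<Rightarrow> nat set set" where
  "cycles n \<pi> = perm_cycle \<pi> ` {1..n}"

definition cycle_count :: "nat \<Rightarrow> (nat \<Rightarrow> nat) \<Rightarrow> nat \<Rightarrow> nat" where
  "cycle_count n \<pi> i = card {c \<in> cycles n \<pi>. card c = i}"

definition cycle_type :: "nat \<Rightarrow> (nat \<Rightarrow> nat) \<Rightarrow> nat list" where
  "cycle_type n \<pi> = map (cycle_count n \<pi>) [1..<Suc n]"

definition cycle_lengths :: "nat \<Rightarrow> (nat \<Rightarrow> nat) \<Rightarrow> nat multiset" where
  "cycle_lengths n \<pi> = image_mset card (mset_set (cycles n \<pi>))"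

definition random_perm :: "nat \<Rightarrow> (nat \<Rightarrow> nat) pmf \<Rightarrow> bool" where
  "random_perm n P \<longleftrightarrow> set_pmf P \<subseteq> {\<pi>. \<pi> permutes {1..n}}"

definition fin_exchangeable :: "nat \<Rightarrow> (nat \<Rightarrow> nat) pmf \<Rightarrow> bool" where
  "fin_exchangeable n P \<longleftrightarrow> random_perm n P \<and>
     (\<forall>\<pi> \<pi>'. \<pi> permutes {1..n} \<longrightarrow> \<pi>' permutes {1..n} \<longrightarrow>
        cycle_type n \<pi> = cycle_type n \<pi>' \<longrightarrow> pmf P \<pi> = pmf P \<pi>')"

definition del :: "nat \<Rightarrow> (nat \<Rightarrow> nat) \<Rightarrow> (nat \<Rightarrow> nat)" where
  "del n \<sigma> = (\<lambda>i. if i \<in> {1..n} then (if \<sigma> i = Suc n then \<sigma> (Suc n) else \<sigma> i) else i)"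

definition consistent :: "(nat \<Rightarrow> (nat \<Rightarrow> nat) pmf) \<Rightarrow> bool" where
  "consistent L \<longleftrightarrow> (\<forall>m\<ge>1. map_pmf (del m) (L (Suc m)) = L m)"

definition exchangeable :: "nat \<Rightarrow> (nat \<Rightarrow> nat) pmf \<Rightarrow> bool" where
  "exchangeable n P \<longleftrightarrow>
     (\<exists>L. (\<forall>m\<ge>1. fin_exchangeable m (L m)) \<and> consistent L \<and> L n = P)"

text \<open>EPPF: phi applied to the list (n_1,...,n_k) of positive block sizes is phi^{(n)}_k(n_1,...,n_k)
  with n = sum and k = length; values on other lists are irrelevant.\<close>
definition EPPF :: "(nat list \<Rightarrow> real) \<Rightarrow> bool" where
  "EPPF \<phi> \<longleftrightarrow>
     (\<forall>xs. xs \<noteq> [] \<and> (\<forall>x\<in>set xs. x > 0) \<longrightarrow> \<phi> xs \<ge> 0) \<and>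
     (\<forall>xs ys. xs \<noteq> [] \<and> (\<forall>x\<in>set xs. x > 0) \<and> mset xs = mset ys \<longrightarrow> \<phi> xs = \<phi> ys) \<and>
     \<phi> [1] = 1 \<and>
     (\<forall>xs. xs \<noteq> [] \<and> (\<forall>x\<in>set xs. x > 0) \<longrightarrow>
        \<phi> xs = (\<Sum>j<length xs. \<phi> (xs[j := xs ! j + 1])) + \<phi> (xs @ [1]))"

end

theory Submission
  imports Defs "HOL-Combinatorics.Orbits"
begin

text \<open>
  An exchangeable law of a random permutation of [m] gives the same probability W(M) to all
  permutations with multiset of cycle lengths M. The preimages under del of a permutation of
  [m] are the permutation itself, with m+1 added as a fixed point, and the m permutations that
  insert m+1 right after some i in its cycle; the latter turn a c-cycle into a (c+1)-cycle in
  c ways. So consistency of the laws for all m amounts to the recursion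
  W(M) = W(M + {1}) + \<Sum>c\<in>M. c W(M - {c} + {c+1}) together with W({1}) = 1. Substituting
  W(M) = \<phi>(n_1,...,n_k) / \<Prod>j. (n_j - 1)!, the factor c cancels against c!/(c-1)! and the
  recursion becomes the addition rule of an EPPF. Conversely every such W defines finitely
  exchangeable consistent laws, their total mass being 1 by the same recursion.
\<close>

section \<open>Cycles as orbits\<close>

lemma perm_cycle_eq_orbit: "permutation p \<Longrightarrow> perm_cycle p x = orbit p x"
  unfolding perm_cycle_def by (simp add: orbit_altdef_permutation)

lemma orbit_eq_if_mem_orbit: "permutation p \<Longrightarrow> y \<in> orbit p x \<Longrightarrow> orbit p y = orbit p x"
  by (metis cyclic_on_orbit' orbit_cyclic_eq3)

lemma permutes_interval_imp_permutation: "p permutes {1..(n::nat)} \<Longrightarrow> permutation p"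
  using permutes_imp_permutation by blast

lemma cycles_permutes: "p permutes {1..n} \<Longrightarrow> cycles n p = orbit p ` {1..n}"
  unfolding cycles_def
  by (simp add: perm_cycle_eq_orbit[OF permutes_interval_imp_permutation])

lemma cycles_memberD:
  assumes "p permutes {1..n}" "C \<in> cycles n p"
  shows "C \<noteq> {}" "C \<subseteq> {1..n}" "x \<in> C \<longleftrightarrow> x \<in> {1..n} \<and> orbit p x = C"
proof -
  have perm: "permutation p" using permutes_interval_imp_permutation[OF assms(1)] .
  obtain y where y: "y \<in> {1..n}" "C = orbit p y"
    using assms by (auto simp: cycles_permutes)
  show "C \<noteq> {}" using y orbit_nonempty by simp
  show sub: "C \<subseteq> {1..n}" using y permutes_orbit_subset[OF assms(1)] by simp
  show "x \<in> C \<longleftrightarrow> x \<in> {1..n} \<and> orbit p x = C"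
    using sub y orbit_eq_if_mem_orbit[OF perm] permutation_self_in_orbit[OF perm] by blast
qed

lemma sum_over_cycles:
  fixes h :: "nat set \<Rightarrow> 'a :: comm_semiring_1"
  assumes "p permutes {1..n}"
  shows "(\<Sum>x\<in>{1..n}. h (orbit p x)) = (\<Sum>C\<in>cycles n p. of_nat (card C) * h C)"
proof -
  have "(\<Sum>x\<in>{1..n}. h (orbit p x)) =
      (\<Sum>C\<in>cycles n p. \<Sum>x\<in>{x \<in> {1..n}. orbit p x = C}. h (orbit p x))"
    by (rule sum.group[symmetric]) (auto simp: cycles_permutes[OF assms])
  also have "\<dots> = (\<Sum>C\<in>cycles n p. \<Sum>x\<in>C. h C)"
    by (intro sum.cong refl) (auto simp: cycles_memberD(3)[OF assms])
  finally show ?thesis by simp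
qed

lemma sum_cycle_lengths: "p permutes {1..n} \<Longrightarrow> sum_mset (cycle_lengths n p) = n"
  using sum_over_cycles[of p n "\<lambda>_. 1 :: nat"]
  by (simp add: cycle_lengths_def sum_unfold_sum_mset cycles_def)

lemma cycle_lengths_bounds:
  assumes "p permutes {1..n}" "c \<in># cycle_lengths n p"
  shows "0 < c" "c \<le> n"
proof -
  obtain C where C: "C \<in> cycles n p" "c = card C"
    using assms(2) by (auto simp: cycle_lengths_def cycles_def)
  have "finite C" using cycles_memberD(2)[OF assms(1) C(1)] finite_subset by blast
  then show "0 < c" using cycles_memberD(1)[OF assms(1) C(1)] C(2) by (simp add: card_gt_0_iff)
  show "c \<le> n" using card_mono[OF _ cycles_memberD(2)[OF assms(1) C(1)]] C(2) by simp
qed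

lemma cycle_lengths_positive:
  assumes "p permutes {1..m}" "1 \<le> m"
  shows "cycle_lengths m p \<noteq> {#}" "\<forall>c\<in>#cycle_lengths m p. 0 < c"
  using sum_cycle_lengths[OF assms(1)] assms(2) cycle_lengths_bounds(1)[OF assms(1)] by auto

lemma count_cycle_lengths: "count (cycle_lengths n p) i = cycle_count n p i"
  unfolding cycle_lengths_def cycle_count_def cycles_def
  by (simp add: count_image_mset_eq_card_vimage)

lemma cycle_type_eq_iff_cycle_lengths_eq:
  assumes "p permutes {1..n}" "q permutes {1..n}"
  shows "cycle_type n p = cycle_type n q \<longleftrightarrow> cycle_lengths n p = cycle_lengths n q"
proof
  assume "cycle_lengths n p = cycle_lengths n q"
  then show "cycle_type n p = cycle_type n q"
    by (simp add: cycle_type_def count_cycle_lengths[symmetric])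
next
  assume type: "cycle_type n p = cycle_type n q"
  show "cycle_lengths n p = cycle_lengths n q"
  proof (rule multiset_eqI)
    fix i
    show "count (cycle_lengths n p) i = count (cycle_lengths n q) i"
    proof (cases "i \<in> {1..n}")
      case True
      have all: "\<forall>x\<in>set [1..<Suc n]. cycle_count n p x = cycle_count n q x"
        using type unfolding cycle_type_def map_eq_conv .
      have "i \<in> set [1..<Suc n]" using True by auto
      from bspec[OF all this] show ?thesis by (simp only: count_cycle_lengths)
    next
      case False
      then have "i \<notin># cycle_lengths n p" "i \<notin># cycle_lengths n q"
        using cycle_lengths_bounds[OF assms(1), of i] cycle_lengths_bounds[OF assms(2), of i]
        by auto
      then show ?thesis by (simp add: not_in_iff)
    qed
  qed
qed

lemma orbit_compose_transpose_self:
  fixes \<tau> :: "'a \<Rightarrow> 'a"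
  assumes "permutation \<tau>" "\<tau> a = a" "i \<noteq> a"
  shows "orbit (\<tau> \<circ> Transposition.transpose i a) i = insert a (orbit \<tau> i)"
proof -
  define \<sigma> where "\<sigma> = \<tau> \<circ> Transposition.transpose i a"
  have \<sigma>: "\<sigma> i = a" "\<sigma> a = \<tau> i" "\<And>y. y \<noteq> i \<Longrightarrow> y \<noteq> a \<Longrightarrow> \<sigma> y = \<tau> y"
    using assms(2,3) by (auto simp: \<sigma>_def transpose_def)
  have "orbit \<tau> a = {a}" using assms(2) by (simp add: orbit_eq_singleton_iff)
  then have "a \<notin> orbit \<tau> i"
    using orbit_eq_if_mem_orbit[OF assms(1), of a i] permutation_self_in_orbit[OF assms(1), of i]
      assms(3) by blast
  have "orbit \<sigma> i \<subseteq> insert a (orbit \<tau> i)"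
  proof
    fix y assume "y \<in> orbit \<sigma> i"
    then show "y \<in> insert a (orbit \<tau> i)"
    proof induction
      case (step y)
      then show ?case using \<sigma> by (cases "y = a \<or> y = i") (auto intro: orbit.intros)
    qed (simp add: \<sigma>)
  qed
  moreover have a_in: "a \<in> orbit \<sigma> i" using orbit.base[of \<sigma> i] \<sigma> by simp
  moreover have "orbit \<tau> i \<subseteq> orbit \<sigma> i"
  proof
    fix y assume "y \<in> orbit \<tau> i"
    then show "y \<in> orbit \<sigma> i"
    proof induction
      case base
      then show ?case using orbit.step[OF a_in] \<sigma> by simp
    next
      case (step y)
      show ?case
      proof (cases "y = i")
        case True
        then show ?thesis using orbit.step[OF a_in] \<sigma>(2) by simp
      next
        case False
        then have "\<sigma> y = \<tau> y" using \<sigma>(3) step.hyps \<open>a \<notin> orbit \<tau> i\<close> by blast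
        then show ?thesis using orbit.step[OF step.IH] by simp
      qed
    qed
  qed
  ultimately show ?thesis by (auto simp: \<sigma>_def)
qed

lemma orbit_compose_transpose_other:
  fixes \<tau> :: "'a \<Rightarrow> 'a"
  assumes "permutation \<tau>" "\<tau> a = a" "x \<notin> insert a (orbit \<tau> i)"
  shows "orbit (\<tau> \<circ> Transposition.transpose i a) x = orbit \<tau> x"
proof (rule orbit_cong0[symmetric])
  show "x \<in> orbit \<tau> x" using assms(1) by (rule permutation_self_in_orbit)
  show "\<tau> \<in> orbit \<tau> x \<rightarrow> orbit \<tau> x" by (auto intro: orbit.step)
  fix y assume y: "y \<in> orbit \<tau> x"
  have "orbit \<tau> a = {a}" using assms(2) by (simp add: orbit_eq_singleton_iff)
  have "y \<noteq> i"
    using y assms(3) orbit_eq_if_mem_orbit[OF assms(1), of i x]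
      permutation_self_in_orbit[OF assms(1), of x] by auto
  moreover have "y \<noteq> a"
    using \<open>orbit \<tau> a = {a}\<close> y assms(3) orbit_eq_if_mem_orbit[OF assms(1), of a x]
      permutation_self_in_orbit[OF assms(1), of x] by auto
  ultimately show "\<tau> y = (\<tau> \<circ> Transposition.transpose i a) y" by simp
qed

section \<open>Adding and deleting the point m+1\<close>

lemma permutes_Suc_fixing:
  assumes "\<tau> permutes {1..m}"
  shows "\<tau> permutes {1..Suc m}" "\<tau> (Suc m) = Suc m"
  using assms by (auto intro: permutes_subset permutes_not_in)

(* Inserts Suc m right after i in its cycle: i \<mapsto> Suc m \<mapsto> \<tau> i. *)
definition insert_after :: "nat \<Rightarrow> (nat \<Rightarrow> nat) \<Rightarrow> nat \<Rightarrow> nat \<Rightarrow> nat" where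
  "insert_after m \<tau> i = \<tau> \<circ> Transposition.transpose i (Suc m)"

lemma insert_after_permutes:
  assumes "\<tau> permutes {1..m}" "i \<in> {1..m}"
  shows "insert_after m \<tau> i permutes {1..Suc m}"
  unfolding insert_after_def using assms(2)
  by (intro permutes_compose[OF permutes_swap_id permutes_Suc_fixing(1)[OF assms(1)]]) auto

lemma insert_after_apply:
  assumes "\<tau> permutes {1..m}" "i \<in> {1..m}"
  shows "insert_after m \<tau> i i = Suc m" "insert_after m \<tau> i (Suc m) = \<tau> i"
    "x \<noteq> i \<Longrightarrow> x \<noteq> Suc m \<Longrightarrow> insert_after m \<tau> i x = \<tau> x"
  using assms permutes_Suc_fixing(2)[OF assms(1)] by (auto simp: insert_after_def transpose_def)

lemma del_permutes_self: "\<tau> permutes {1..m} \<Longrightarrow> del m \<tau> = \<tau>"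
  by (auto simp: del_def fun_eq_iff permutes_in_image permutes_not_in)

lemma del_insert_after:
  assumes "\<tau> permutes {1..m}" "i \<in> {1..m}"
  shows "del m (insert_after m \<tau> i) = \<tau>"
proof
  fix x
  show "del m (insert_after m \<tau> i) x = \<tau> x"
    using permutes_in_image[OF assms(1), of x] permutes_not_in[OF assms(1), of x]
      insert_after_apply[OF assms]
    unfolding del_def by (cases "x = i") auto
qed

lemma permutes_Suc_cases:
  assumes "\<sigma> permutes {1..Suc m}"
  obtains \<tau> where "\<tau> permutes {1..m}" "\<sigma> = \<tau> \<or> (\<exists>i\<in>{1..m}. \<sigma> = insert_after m \<tau> i)"
proof -
  define j where "j = inv \<sigma> (Suc m)"
  have "j \<in> {1..Suc m}"
    unfolding j_def by (rule permutes_in_image[OF permutes_inv[OF assms], THEN iffD2]) simp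
  have "\<sigma> j = Suc m"
    unfolding j_def by (rule permutes_inverses(1)[OF assms])
  define \<tau> where "\<tau> = \<sigma> \<circ> Transposition.transpose j (Suc m)"
  have "\<tau> permutes {1..Suc m}"
    unfolding \<tau>_def using \<open>j \<in> {1..Suc m}\<close>
    by (intro permutes_compose[OF permutes_swap_id assms]) auto
  then have \<tau>: "\<tau> permutes {1..m}"
    by (rule permutes_superset) (auto simp: \<tau>_def \<open>\<sigma> j = Suc m\<close> le_Suc_eq)
  have "\<sigma> = \<tau> \<circ> Transposition.transpose j (Suc m)"
    by (simp add: \<tau>_def comp_assoc)
  then have "\<sigma> = \<tau> \<or> (\<exists>i\<in>{1..m}. \<sigma> = insert_after m \<tau> i)"
    using \<open>j \<in> {1..Suc m}\<close> by (cases "j = Suc m") (auto simp: insert_after_def)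
  with \<tau> show thesis by (rule that)
qed

lemma del_permutes: "\<sigma> permutes {1..Suc m} \<Longrightarrow> del m \<sigma> permutes {1..m}"
  by (elim permutes_Suc_cases) (auto simp: del_permutes_self del_insert_after)

lemma fibre_del:
  assumes "\<tau> permutes {1..m}"
  shows "{\<sigma>. \<sigma> permutes {1..Suc m} \<and> del m \<sigma> = \<tau>} = insert \<tau> (insert_after m \<tau> ` {1..m})"
proof (intro set_eqI iffI)
  fix \<sigma> assume "\<sigma> \<in> {\<sigma>. \<sigma> permutes {1..Suc m} \<and> del m \<sigma> = \<tau>}"
  then have "\<sigma> permutes {1..Suc m}" "del m \<sigma> = \<tau>" by auto
  then show "\<sigma> \<in> insert \<tau> (insert_after m \<tau> ` {1..m})"
    by (elim permutes_Suc_cases) (auto simp: del_permutes_self del_insert_after)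
qed (use insert_after_permutes[OF assms] del_insert_after[OF assms]
      permutes_Suc_fixing(1)[OF assms] del_permutes_self[OF assms] in auto)

lemma inj_on_insert_after:
  assumes "\<tau> permutes {1..m}"
  shows "inj_on (insert_after m \<tau>) {1..m}"
proof (rule inj_onI, rule ccontr)
  fix i j
  assume i: "i \<in> {1..m}" and j: "j \<in> {1..m}" and "i \<noteq> j"
    and eq: "insert_after m \<tau> i = insert_after m \<tau> j"
  have "Suc m = insert_after m \<tau> j i"
    using insert_after_apply(1)[OF assms i] eq by simp
  also have "\<dots> = \<tau> i"
    using insert_after_apply(3)[OF assms j, of i] \<open>i \<noteq> j\<close> i by simp
  finally show False using permutes_in_image[OF assms, of i] i by simp
qed

lemma self_notin_insert_after:
  assumes "\<tau> permutes {1..m}"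
  shows "\<tau> \<notin> insert_after m \<tau> ` {1..m}"
proof
  assume "\<tau> \<in> insert_after m \<tau> ` {1..m}"
  then obtain i where i: "i \<in> {1..m}" "\<tau> = insert_after m \<tau> i" by blast
  have "\<tau> i = Suc m"
    using fun_cong[OF i(2), of i] insert_after_apply(1)[OF assms i(1)] by simp
  then show False using permutes_in_image[OF assms, of i] i(1) by simp
qed

lemma cycle_lengths_Suc_fixed:
  assumes "\<tau> permutes {1..m}"
  shows "cycle_lengths (Suc m) \<tau> = add_mset 1 (cycle_lengths m \<tau>)"
proof -
  have "orbit \<tau> (Suc m) = {Suc m}"
    using permutes_Suc_fixing(2)[OF assms] by (simp add: orbit_eq_singleton_iff)
  then have "cycles (Suc m) \<tau> = insert {Suc m} (cycles m \<tau>)"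
    by (simp add: cycles_permutes[OF assms] cycles_permutes[OF permutes_Suc_fixing(1)[OF assms]]
        atLeastAtMostSuc_conv)
  moreover have "{Suc m} \<notin> cycles m \<tau>"
    using cycles_memberD(2)[OF assms] by fastforce
  ultimately show ?thesis by (simp add: cycle_lengths_def cycles_def)
qed

lemma cycle_lengths_one: "cycle_lengths 1 id = {#1#}"
  using cycle_lengths_Suc_fixed[of id 0] by (simp add: cycle_lengths_def cycles_def)

lemma cycles_insert_after:
  assumes \<tau>: "\<tau> permutes {1..m}" and i: "i \<in> {1..m}"
  shows "cycles (Suc m) (insert_after m \<tau> i) =
    insert (insert (Suc m) (orbit \<tau> i)) (cycles m \<tau> - {orbit \<tau> i})"
proof -
  define \<sigma> where "\<sigma> = insert_after m \<tau> i"
  define C where "C = orbit \<tau> i"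
  have \<sigma>_perm: "\<sigma> permutes {1..Suc m}" unfolding \<sigma>_def by (rule insert_after_permutes[OF \<tau> i])
  have \<tau>_perm: "permutation \<tau>" by (rule permutes_interval_imp_permutation[OF \<tau>])
  have C: "C \<subseteq> {1..m}" "i \<in> C"
    using permutes_orbit_subset[OF \<tau> i] permutation_self_in_orbit[OF \<tau>_perm] by (auto simp: C_def)
  have in_C: "x \<in> C \<longleftrightarrow> orbit \<tau> x = C" for x
    using orbit_eq_if_mem_orbit[OF \<tau>_perm, of x i] permutation_self_in_orbit[OF \<tau>_perm, of x]
    unfolding C_def[symmetric] by auto
  have "{1..Suc m} = ({1..m} - C) \<union> insert (Suc m) C" using C by auto
  then have "cycles (Suc m) \<sigma> = orbit \<sigma> ` ({1..m} - C) \<union> orbit \<sigma> ` insert (Suc m) C"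
    unfolding cycles_permutes[OF \<sigma>_perm] by (simp only: image_Un)
  also have "orbit \<sigma> ` ({1..m} - C) = orbit \<tau> ` ({1..m} - C)"
    using orbit_compose_transpose_other[OF \<tau>_perm permutes_Suc_fixing(2)[OF \<tau>]] C(1)
    by (intro image_cong) (auto simp: \<sigma>_def insert_after_def C_def)
  also have "\<dots> = cycles m \<tau> - {C}"
    unfolding cycles_permutes[OF \<tau>] using in_C by blast
  also have "orbit \<sigma> ` insert (Suc m) C = {insert (Suc m) C}"
  proof -
    have "orbit \<sigma> i = insert (Suc m) C"
      using orbit_compose_transpose_self[OF \<tau>_perm permutes_Suc_fixing(2)[OF \<tau>], of i] i
      by (simp add: \<sigma>_def C_def insert_after_def)
    then have "orbit \<sigma> y = insert (Suc m) C" if "y \<in> insert (Suc m) C" for y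
      using orbit_eq_if_mem_orbit[OF permutes_interval_imp_permutation[OF \<sigma>_perm], of y i] that
      by simp
    then show ?thesis by blast
  qed
  finally show ?thesis by (simp add: \<sigma>_def C_def)
qed

lemma cycle_lengths_insert_after:
  assumes \<tau>: "\<tau> permutes {1..m}" and i: "i \<in> {1..m}"
  shows "cycle_lengths (Suc m) (insert_after m \<tau> i) =
    add_mset (Suc (card (orbit \<tau> i))) (cycle_lengths m \<tau> - {#card (orbit \<tau> i)#})"
proof -
  define C where "C = orbit \<tau> i"
  have "C \<in> cycles m \<tau>" using i by (simp add: cycles_permutes[OF \<tau>] C_def)
  then have "finite C" "Suc m \<notin> C"
    using cycles_memberD(2)[OF \<tau>] finite_subset by fastforce+
  then have "card (insert (Suc m) C) = Suc (card C)" by simp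
  moreover have "insert (Suc m) C \<notin> cycles m \<tau>" using cycles_memberD(2)[OF \<tau>] by fastforce
  ultimately show ?thesis
    using \<open>C \<in> cycles m \<tau>\<close>
    unfolding cycle_lengths_def cycles_insert_after[OF \<tau> i] C_def[symmetric]
    by (simp add: mset_set_Diff image_mset_Diff cycles_def)
qed

lemma exists_permutes_grow_cycle:
  assumes \<tau>: "\<tau> permutes {1..m}" and "c \<in># cycle_lengths m \<tau>"
  shows "\<exists>\<sigma>. \<sigma> permutes {1..Suc m} \<and>
    cycle_lengths (Suc m) \<sigma> = add_mset (Suc c) (cycle_lengths m \<tau> - {#c#})"
proof -
  obtain i where "i \<in> {1..m}" "card (orbit \<tau> i) = c"
    using assms(2) by (auto simp: cycle_lengths_def cycles_permutes[OF \<tau>])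
  then show ?thesis
    using insert_after_permutes[OF \<tau>] cycle_lengths_insert_after[OF \<tau>] by metis
qed

lemma exists_permutes_cycle_lengths:
  assumes "sum_mset M = m" "\<forall>c\<in>#M. 0 < c"
  shows "\<exists>\<pi>. \<pi> permutes {1..m} \<and> cycle_lengths m \<pi> = M"
  using assms
proof (induction m arbitrary: M)
  case 0
  have "M = {#}"
  proof (rule ccontr)
    assume "M \<noteq> {#}"
    then obtain x where "x \<in># M" by blast
    with 0 show False by auto
  qed
  then show ?case by (auto simp: cycle_lengths_def cycles_def)
next
  case (Suc m)
  show ?case
  proof (cases "1 \<in># M")
    case True
    define M' where "M' = M - {#1#}"
    have M: "M = add_mset 1 M'" using True by (simp add: M'_def)
    have "sum_mset M' = m" "\<forall>c\<in>#M'. 0 < c" using Suc.prems by (simp_all add: M)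
    then obtain \<tau> where "\<tau> permutes {1..m}" "cycle_lengths m \<tau> = M'"
      using Suc.IH by blast
    then show ?thesis
      using permutes_Suc_fixing(1) cycle_lengths_Suc_fixed M by metis
  next
    case False
    have "M \<noteq> {#}" using Suc.prems(1) by auto
    then obtain c where c: "c \<in># M" by blast
    have "0 < c" "c \<noteq> 1" using c False Suc.prems(2) by auto
    then have "2 \<le> c" by linarith
    define M' where "M' = add_mset (c - 1) (M - {#c#})"
    have M: "M = add_mset c (M' - {#c - 1#})" using c by (simp add: M'_def)
    have "sum_mset M = c + sum_mset (M - {#c#})" by (rule sum_mset.remove[OF c])
    then have "sum_mset M' = m" "\<forall>c\<in>#M'. 0 < c"
      using Suc.prems \<open>2 \<le> c\<close> by (auto simp: M'_def dest: in_diffD)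
    then obtain \<tau> where \<tau>: "\<tau> permutes {1..m}" "cycle_lengths m \<tau> = M'"
      using Suc.IH by blast
    have "c - 1 \<in># cycle_lengths m \<tau>" using \<tau>(2) by (simp add: M'_def)
    from exists_permutes_grow_cycle[OF \<tau>(1) this] show ?thesis
      using \<open>2 \<le> c\<close> M \<tau>(2) by simp
  qed
qed

section \<open>Cycle weights and EPPFs\<close>

(* Total weight of the preimages under del m of a permutation with cycle lengths M
   (sum_fibre_del): Suc m is a new fixed point, or is inserted into a c-cycle in one of c ways. *)
definition extension_weight :: "(nat multiset \<Rightarrow> 'a::comm_semiring_1) \<Rightarrow> nat multiset \<Rightarrow> 'a" where
  "extension_weight W M =
     W (add_mset 1 M) + (\<Sum>c\<in>#M. of_nat c * W (add_mset (Suc c) (M - {#c#})))"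

lemma sum_fibre_del:
  assumes \<tau>: "\<tau> permutes {1..m}"
  shows "(\<Sum>\<sigma> | \<sigma> permutes {1..Suc m} \<and> del m \<sigma> = \<tau>. W (cycle_lengths (Suc m) \<sigma>)) =
    extension_weight W (cycle_lengths m \<tau>)"
proof -
  define h where "h (C :: nat set) = W (add_mset (Suc (card C)) (cycle_lengths m \<tau> - {#card C#}))" for C
  have "(\<Sum>\<sigma> | \<sigma> permutes {1..Suc m} \<and> del m \<sigma> = \<tau>. W (cycle_lengths (Suc m) \<sigma>)) =
      W (cycle_lengths (Suc m) \<tau>) + (\<Sum>\<sigma>\<in>insert_after m \<tau> ` {1..m}. W (cycle_lengths (Suc m) \<sigma>))"
    unfolding fibre_del[OF \<tau>] using self_notin_insert_after[OF \<tau>] by simp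
  also have "(\<Sum>\<sigma>\<in>insert_after m \<tau> ` {1..m}. W (cycle_lengths (Suc m) \<sigma>)) = (\<Sum>i\<in>{1..m}. h (orbit \<tau> i))"
    by (rule sum.reindex_cong[OF inj_on_insert_after[OF \<tau>] refl])
      (simp add: h_def cycle_lengths_insert_after[OF \<tau>])
  also have "\<dots> = (\<Sum>C\<in>cycles m \<tau>. of_nat (card C) * h C)"
    by (rule sum_over_cycles[OF \<tau>])
  also have "\<dots> = (\<Sum>c\<in>#cycle_lengths m \<tau>. of_nat c * W (add_mset (Suc c) (cycle_lengths m \<tau> - {#c#})))"
    unfolding h_def cycle_lengths_def[of m \<tau>] sum_unfold_sum_mset
    by (simp add: multiset.map_comp o_def)
  finally show ?thesis by (simp add: extension_weight_def cycle_lengths_Suc_fixed[OF \<tau>])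
qed

lemma sum_permutes_Suc_by_del:
  "(\<Sum>\<sigma> | \<sigma> permutes {1..Suc m}. g \<sigma>) =
    (\<Sum>\<tau> | \<tau> permutes {1..m}. \<Sum>\<sigma> | \<sigma> permutes {1..Suc m} \<and> del m \<sigma> = \<tau>. g \<sigma>)"
proof -
  have "del m ` {\<sigma>. \<sigma> permutes {1..Suc m}} \<subseteq> {\<tau>. \<tau> permutes {1..m}}"
    using del_permutes by blast
  from sum.group[OF finite_permutations finite_permutations this, of g] show ?thesis by simp
qed

lemma prod_fact_pos: "0 < (\<Prod>j\<leftarrow>xs. fact (j - 1) :: real)"
  by (induction xs) auto

lemma prod_fact_mset: "(\<Prod>j\<leftarrow>xs. fact (j - 1) :: real) = (\<Prod>j\<in>#mset xs. fact (j - 1))"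
  by (induction xs) auto

lemma prod_fact_update:
  assumes "j < length xs" "0 < xs ! j"
  shows "(\<Prod>k\<leftarrow>xs[j := xs ! j + 1]. fact (k - 1) :: real) = of_nat (xs ! j) * (\<Prod>k\<leftarrow>xs. fact (k - 1))"
proof -
  define c where "c = xs ! j"
  have xs: "mset xs = add_mset c (mset xs - {#c#})" using assms(1) by (simp add: c_def)
  have "fact c = of_nat c * (fact (c - 1) :: real)" using assms(2) by (simp add: c_def fact_reduce)
  then show ?thesis
    by (subst (1 2) prod_fact_mset, subst xs, subst mset_update[OF assms(1)]) (simp add: c_def)
qed

lemma sum_mset_mset_eq_sum_nth: "(\<Sum>c\<in>#mset xs. f c) = (\<Sum>j<length xs. f (xs ! j))"
  unfolding mset_map[symmetric] sum_mset_sum_list by (simp add: sum_list_sum_nth atLeast0LessThan)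

lemma extension_weight_mset:
  fixes \<phi> :: "nat list \<Rightarrow> real" and W :: "nat multiset \<Rightarrow> real"
  assumes W: "\<And>ys. ys \<noteq> [] \<Longrightarrow> \<forall>y\<in>set ys. 0 < y \<Longrightarrow>
      \<phi> ys = W (mset ys) * (\<Prod>j\<leftarrow>ys. fact (j - 1))"
    and xs: "xs \<noteq> []" "\<forall>x\<in>set xs. 0 < x"
  shows "extension_weight W (mset xs) * (\<Prod>j\<leftarrow>xs. fact (j - 1)) =
    (\<Sum>j<length xs. \<phi> (xs[j := xs ! j + 1])) + \<phi> (xs @ [1])"
proof -
  define P where "P = (\<Prod>j\<leftarrow>xs. fact (j - 1) :: real)"
  have new_cycle: "W (add_mset 1 (mset xs)) * P = \<phi> (xs @ [1])"
    using W[of "xs @ [1]"] xs by (simp add: P_def)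
  have grown_cycle: "of_nat (xs ! j) * W (add_mset (Suc (xs ! j)) (mset xs - {#xs ! j#})) * P =
      \<phi> (xs[j := xs ! j + 1])" if j: "j < length xs" for j
  proof -
    have "\<forall>y\<in>set (xs[j := xs ! j + 1]). 0 < y"
      using xs(2) set_update_subset_insert[of xs j "xs ! j + 1"] by auto
    then show ?thesis
      using W[of "xs[j := xs ! j + 1]"] xs j prod_fact_update[OF j] mset_update[OF j]
      by (simp add: P_def)
  qed
  have "extension_weight W (mset xs) * P =
      W (add_mset 1 (mset xs)) * P +
      (\<Sum>j<length xs. of_nat (xs ! j) * W (add_mset (Suc (xs ! j)) (mset xs - {#xs ! j#})) * P)"
    by (simp add: extension_weight_def sum_mset_mset_eq_sum_nth distrib_right sum_distrib_right)
  also have "\<dots> = \<phi> (xs @ [1]) + (\<Sum>j<length xs. \<phi> (xs[j := xs ! j + 1]))"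
    using new_cycle grown_cycle by simp
  finally show ?thesis by (simp add: P_def)
qed

(* W M is the p(\<pi>) of the statement: the common probability of every \<pi> with cycle lengths M. *)
definition consistent_cycle_weight :: "(nat multiset \<Rightarrow> real) \<Rightarrow> bool" where
  "consistent_cycle_weight W \<longleftrightarrow> W {#1#} = 1 \<and>
     (\<forall>M. M \<noteq> {#} \<and> (\<forall>c\<in>#M. 0 < c) \<longrightarrow> 0 \<le> W M \<and> extension_weight W M = W M)"

lemma consistent_cycle_weight_cycle_lengths:
  assumes "consistent_cycle_weight W" "\<pi> permutes {1..m}" "1 \<le> m"
  shows "0 \<le> W (cycle_lengths m \<pi>)"
    "extension_weight W (cycle_lengths m \<pi>) = W (cycle_lengths m \<pi>)"
  using assms(1) cycle_lengths_positive[OF assms(2,3)]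
  unfolding consistent_cycle_weight_def by blast+

lemma all_positive_multisets_iff:
  "(\<forall>M. M \<noteq> {#} \<and> (\<forall>c\<in>#M. 0 < c) \<longrightarrow> Q M) \<longleftrightarrow>
    (\<forall>xs. xs \<noteq> [] \<and> (\<forall>x\<in>set xs. 0 < x) \<longrightarrow> Q (mset xs))"
  by (metis ex_mset mset_zero_iff set_mset_mset)

lemma EPPF_iff_consistent_cycle_weight:
  fixes \<phi> :: "nat list \<Rightarrow> real" and W :: "nat multiset \<Rightarrow> real"
  assumes W: "\<And>xs. xs \<noteq> [] \<Longrightarrow> \<forall>x\<in>set xs. 0 < x \<Longrightarrow>
      \<phi> xs = W (mset xs) * (\<Prod>j\<leftarrow>xs. fact (j - 1))"
  shows "EPPF \<phi> \<longleftrightarrow> consistent_cycle_weight W"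
proof -
  have one: "\<phi> [1] = W {#1#}" using W[of "[1]"] by simp
  have sym: "\<phi> xs = \<phi> ys" if "xs \<noteq> []" "\<forall>x\<in>set xs. 0 < x" "mset xs = mset ys" for xs ys
  proof -
    have "ys \<noteq> []" "\<forall>y\<in>set ys. 0 < y" using that by (auto dest: mset_eq_setD)
    moreover have "(\<Prod>j\<leftarrow>xs. fact (j - 1) :: real) = (\<Prod>j\<leftarrow>ys. fact (j - 1))"
      by (simp only: prod_fact_mset that(3))
    ultimately show ?thesis using W that by simp
  qed
  have nonneg: "0 \<le> \<phi> xs \<longleftrightarrow> 0 \<le> W (mset xs)" if "xs \<noteq> []" "\<forall>x\<in>set xs. 0 < x" for xs
    using W[OF that] prod_fact_pos[of xs] by (simp add: zero_le_mult_iff)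
  have recursion: "\<phi> xs = (\<Sum>j<length xs. \<phi> (xs[j := xs ! j + 1])) + \<phi> (xs @ [1]) \<longleftrightarrow>
      extension_weight W (mset xs) = W (mset xs)" if "xs \<noteq> []" "\<forall>x\<in>set xs. 0 < x" for xs
  proof -
    define P where "P = (\<Prod>j\<leftarrow>xs. fact (j - 1) :: real)"
    have "P \<noteq> 0" using prod_fact_pos[of xs] by (simp add: P_def)
    moreover have "\<phi> xs = W (mset xs) * P" using W[OF that] by (simp add: P_def)
    ultimately show ?thesis
      using extension_weight_mset[OF W that] unfolding P_def[symmetric]
      by (metis mult_right_cancel)
  qed
  have "EPPF \<phi> \<longleftrightarrow> \<phi> [1] = 1 \<and> (\<forall>xs. xs \<noteq> [] \<and> (\<forall>x\<in>set xs. 0 < x) \<longrightarrow>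
      0 \<le> \<phi> xs \<and> \<phi> xs = (\<Sum>j<length xs. \<phi> (xs[j := xs ! j + 1])) + \<phi> (xs @ [1]))"
    unfolding EPPF_def using sym by blast
  also have "\<dots> \<longleftrightarrow> W {#1#} = 1 \<and> (\<forall>xs. xs \<noteq> [] \<and> (\<forall>x\<in>set xs. 0 < x) \<longrightarrow>
      0 \<le> W (mset xs) \<and> extension_weight W (mset xs) = W (mset xs))"
    using one nonneg recursion by (simp cong: conj_cong imp_cong)
  also have "\<dots> \<longleftrightarrow> consistent_cycle_weight W"
    unfolding consistent_cycle_weight_def all_positive_multisets_iff ..
  finally show ?thesis .
qed

lemma EPPF_factorization:
  assumes "EPPF \<phi>"
  obtains W where "consistent_cycle_weight W"
    "\<And>xs. xs \<noteq> [] \<Longrightarrow> \<forall>x\<in>set xs. 0 < x \<Longrightarrow> \<phi> xs = W (mset xs) * (\<Prod>j\<leftarrow>xs. fact (j - 1))"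
proof -
  define W where "W M = \<phi> (sorted_list_of_multiset M) /
      (\<Prod>j\<leftarrow>sorted_list_of_multiset M. fact (j - 1))" for M
  have \<phi>_W: "\<phi> xs = W (mset xs) * (\<Prod>j\<leftarrow>xs. fact (j - 1))"
    if "xs \<noteq> []" "\<forall>x\<in>set xs. 0 < x" for xs
  proof -
    have "\<phi> (sorted_list_of_multiset (mset xs)) = \<phi> xs"
      using assms that unfolding EPPF_def by (metis mset_sorted_list_of_multiset)
    moreover have "(\<Prod>j\<leftarrow>sorted_list_of_multiset (mset xs). fact (j - 1) :: real) =
        (\<Prod>j\<leftarrow>xs. fact (j - 1))"
      by (simp only: prod_fact_mset mset_sorted_list_of_multiset)
    ultimately show ?thesis using prod_fact_pos[of xs] by (simp add: W_def)
  qed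
  then have "consistent_cycle_weight W"
    using EPPF_iff_consistent_cycle_weight assms by blast
  from that[OF this \<phi>_W] show thesis .
qed

section \<open>Exchangeable laws and cycle weights\<close>

lemma pmf_map_pmf_finite:
  assumes "set_pmf p \<subseteq> A" "finite A"
  shows "pmf (map_pmf f p) y = (\<Sum>x | x \<in> A \<and> f x = y. pmf p x)"
proof -
  have "pmf (map_pmf f p) y = measure p (f -` {y} \<inter> set_pmf p)"
    by (simp add: pmf_map measure_Int_set_pmf)
  also have "f -` {y} \<inter> set_pmf p = {x. x \<in> A \<and> f x = y} \<inter> set_pmf p"
    using assms(1) by auto
  also have "measure p \<dots> = (\<Sum>x | x \<in> A \<and> f x = y. pmf p x)"
    using assms(2) by (simp add: measure_Int_set_pmf measure_measure_pmf_finite)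
  finally show ?thesis .
qed

lemma pmf_map_del:
  assumes "random_perm (Suc m) P"
  shows "pmf (map_pmf (del m) P) \<tau> = (\<Sum>\<sigma> | \<sigma> permutes {1..Suc m} \<and> del m \<sigma> = \<tau>. pmf P \<sigma>)"
  using pmf_map_pmf_finite[of P "{\<sigma>. \<sigma> permutes {1..Suc m}}"] assms
  by (simp add: random_perm_def finite_permutations)

definition perm_of_cycle_lengths :: "nat multiset \<Rightarrow> nat \<Rightarrow> nat" where
  "perm_of_cycle_lengths M =
     (SOME \<pi>. \<pi> permutes {1..sum_mset M} \<and> cycle_lengths (sum_mset M) \<pi> = M)"

lemma perm_of_cycle_lengths:
  assumes "\<forall>c\<in>#M. 0 < c"
  shows "perm_of_cycle_lengths M permutes {1..sum_mset M}"
    "cycle_lengths (sum_mset M) (perm_of_cycle_lengths M) = M"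
  using someI_ex[OF exists_permutes_cycle_lengths[OF refl assms]]
  unfolding perm_of_cycle_lengths_def by auto

lemma pmf_fin_exchangeable:
  assumes "fin_exchangeable m P" "\<pi> permutes {1..m}"
  shows "pmf P \<pi> = pmf P (perm_of_cycle_lengths (cycle_lengths m \<pi>))"
proof -
  define M where "M = cycle_lengths m \<pi>"
  have "sum_mset M = m" "\<forall>c\<in>#M. 0 < c"
    using sum_cycle_lengths[OF assms(2)] cycle_lengths_bounds(1)[OF assms(2)] by (auto simp: M_def)
  then have "perm_of_cycle_lengths M permutes {1..m}" "cycle_lengths m (perm_of_cycle_lengths M) = M"
    using perm_of_cycle_lengths by auto
  then show ?thesis
    using assms cycle_type_eq_iff_cycle_lengths_eq unfolding fin_exchangeable_def M_def by metis
qed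

lemma consistent_imp_extension_weight:
  assumes "consistent L" "1 \<le> m" "random_perm (Suc m) (L (Suc m))"
    and W: "\<And>k \<pi>. k \<in> {m, Suc m} \<Longrightarrow> \<pi> permutes {1..k} \<Longrightarrow> pmf (L k) \<pi> = W (cycle_lengths k \<pi>)"
    and \<tau>: "\<tau> permutes {1..m}"
  shows "extension_weight W (cycle_lengths m \<tau>) = W (cycle_lengths m \<tau>)"
proof -
  have "W (cycle_lengths m \<tau>) = pmf (map_pmf (del m) (L (Suc m))) \<tau>"
    using W[OF _ \<tau>] assms(1,2) by (simp add: consistent_def)
  also have "\<dots> = (\<Sum>\<sigma> | \<sigma> permutes {1..Suc m} \<and> del m \<sigma> = \<tau>. pmf (L (Suc m)) \<sigma>)"
    using assms(3) by (rule pmf_map_del)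
  also have "\<dots> = (\<Sum>\<sigma> | \<sigma> permutes {1..Suc m} \<and> del m \<sigma> = \<tau>. W (cycle_lengths (Suc m) \<sigma>))"
    by (rule sum.cong) (simp_all add: W)
  also have "\<dots> = extension_weight W (cycle_lengths m \<tau>)" by (rule sum_fibre_del[OF \<tau>])
  finally show ?thesis ..
qed

lemma exchangeable_imp_consistent_cycle_weight:
  assumes "exchangeable n P" "1 \<le> n"
  obtains W where "consistent_cycle_weight W"
    "\<And>\<pi>. \<pi> permutes {1..n} \<Longrightarrow> pmf P \<pi> = W (cycle_lengths n \<pi>)"
proof -
  obtain L where fin_exch: "\<And>m. 1 \<le> m \<Longrightarrow> fin_exchangeable m (L m)"
    and "consistent L" and "L n = P"
    using assms(1) unfolding exchangeable_def by blast
  define W where "W M = pmf (L (sum_mset M)) (perm_of_cycle_lengths M)" for M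
  have pmf_L: "pmf (L m) \<pi> = W (cycle_lengths m \<pi>)" if "1 \<le> m" "\<pi> permutes {1..m}" for m \<pi>
    using pmf_fin_exchangeable[OF fin_exch[OF that(1)] that(2)] sum_cycle_lengths[OF that(2)]
    by (simp add: W_def)
  have "W {#1#} = 1"
  proof -
    have "set_pmf (L 1) \<subseteq> {id}"
      using fin_exch[of 1] by (simp add: fin_exchangeable_def random_perm_def)
    then have "pmf (L 1) id = 1" using sum_pmf_eq_1[of "{id}" "L 1"] by simp
    then show ?thesis using pmf_L[of 1 id] cycle_lengths_one by simp
  qed
  moreover have "0 \<le> W M \<and> extension_weight W M = W M" if M: "M \<noteq> {#}" "\<forall>c\<in>#M. 0 < c" for M
  proof -
    define m where "m = sum_mset M"
    obtain c where "c \<in># M" using M(1) by blast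
    then have "m \<noteq> 0" using M(2) by (auto simp: m_def)
    then have "1 \<le> m" by simp
    have \<tau>: "perm_of_cycle_lengths M permutes {1..m}" "cycle_lengths m (perm_of_cycle_lengths M) = M"
      using perm_of_cycle_lengths[OF M(2)] by (simp_all add: m_def)
    have "random_perm (Suc m) (L (Suc m))"
      using fin_exch[of "Suc m"] by (simp add: fin_exchangeable_def)
    then have "extension_weight W M = W M"
      using consistent_imp_extension_weight[OF \<open>consistent L\<close> \<open>1 \<le> m\<close> _ _ \<tau>(1), of W]
        pmf_L \<open>1 \<le> m\<close> \<tau>(2) by auto
    then show ?thesis by (simp add: W_def)
  qed
  ultimately have "consistent_cycle_weight W" unfolding consistent_cycle_weight_def by blast
  then show thesis using that pmf_L[OF assms(2)] \<open>L n = P\<close> by blast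
qed

lemma sum_consistent_cycle_weight:
  assumes W: "consistent_cycle_weight W" and "1 \<le> m"
  shows "(\<Sum>\<pi> | \<pi> permutes {1..m}. W (cycle_lengths m \<pi>)) = 1"
  using \<open>1 \<le> m\<close>
proof (induction m rule: nat_induct_at_least)
  case base
  have "{\<pi>. \<pi> permutes {1..1::nat}} = {id}" by simp
  then show ?case using W cycle_lengths_one by (simp add: consistent_cycle_weight_def id_def)
next
  case (Suc m)
  have "(\<Sum>\<sigma> | \<sigma> permutes {1..Suc m}. W (cycle_lengths (Suc m) \<sigma>)) =
      (\<Sum>\<tau> | \<tau> permutes {1..m}. extension_weight W (cycle_lengths m \<tau>))"
    unfolding sum_permutes_Suc_by_del using sum_fibre_del by (intro sum.cong) auto
  also have "\<dots> = (\<Sum>\<tau> | \<tau> permutes {1..m}. W (cycle_lengths m \<tau>))"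
    using consistent_cycle_weight_cycle_lengths(2)[OF W _ Suc.hyps] by (intro sum.cong) simp_all
  finally show ?case using Suc.IH by simp
qed

(* For m = 0 the weights need not sum to 1 and the law is unspecified; only m \<ge> 1 matters. *)
definition cycle_weight_law :: "(nat multiset \<Rightarrow> real) \<Rightarrow> nat \<Rightarrow> (nat \<Rightarrow> nat) pmf" where
  "cycle_weight_law W m = embed_pmf (\<lambda>\<pi>. if \<pi> permutes {1..m} then W (cycle_lengths m \<pi>) else 0)"

lemma pmf_cycle_weight_law:
  assumes W: "consistent_cycle_weight W" and "1 \<le> m"
  shows "pmf (cycle_weight_law W m) \<pi> = (if \<pi> permutes {1..m} then W (cycle_lengths m \<pi>) else 0)"
  unfolding cycle_weight_law_def
proof (rule pmf_embed_pmf)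
  have nonneg: "0 \<le> W (cycle_lengths m \<pi>)" if "\<pi> permutes {1..m}" for \<pi>
    using consistent_cycle_weight_cycle_lengths(1)[OF W that \<open>1 \<le> m\<close>] .
  then show "0 \<le> (if \<pi> permutes {1..m} then W (cycle_lengths m \<pi>) else 0)" for \<pi>
    by simp
  have "(\<integral>\<^sup>+\<pi>. ennreal (if \<pi> permutes {1..m} then W (cycle_lengths m \<pi>) else 0) \<partial>count_space UNIV) =
      (\<Sum>\<pi> | \<pi> permutes {1..m}. ennreal (W (cycle_lengths m \<pi>)))"
    by (subst nn_integral_count_space'[of "{\<pi>. \<pi> permutes {1..m}}"]) (auto simp: finite_permutations)
  also have "\<dots> = ennreal (\<Sum>\<pi> | \<pi> permutes {1..m}. W (cycle_lengths m \<pi>))"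
    by (rule sum_ennreal) (use nonneg in auto)
  finally show "(\<integral>\<^sup>+\<pi>. ennreal (if \<pi> permutes {1..m} then W (cycle_lengths m \<pi>) else 0) \<partial>count_space UNIV) = 1"
    using sum_consistent_cycle_weight[OF W \<open>1 \<le> m\<close>] by simp
qed

lemma fin_exchangeable_cycle_weight_law:
  assumes "consistent_cycle_weight W" "1 \<le> m"
  shows "fin_exchangeable m (cycle_weight_law W m)"
  unfolding fin_exchangeable_def random_perm_def
  using pmf_cycle_weight_law[OF assms] cycle_type_eq_iff_cycle_lengths_eq
  by (auto simp: set_pmf_eq)

lemma consistent_cycle_weight_law:
  assumes W: "consistent_cycle_weight W"
  shows "consistent (cycle_weight_law W)"
  unfolding consistent_def
proof (intro allI impI pmf_eqI)
  fix m :: nat and \<tau> assume "1 \<le> m"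
  note pmf_law = pmf_cycle_weight_law[OF W]
  have "pmf (map_pmf (del m) (cycle_weight_law W (Suc m))) \<tau> =
      (\<Sum>\<sigma> | \<sigma> permutes {1..Suc m} \<and> del m \<sigma> = \<tau>. W (cycle_lengths (Suc m) \<sigma>))"
    using fin_exchangeable_cycle_weight_law[OF W, of "Suc m"]
    by (simp add: pmf_map_del fin_exchangeable_def pmf_law)
  also have "\<dots> = pmf (cycle_weight_law W m) \<tau>"
  proof (cases "\<tau> permutes {1..m}")
    case True
    then show ?thesis
      using sum_fibre_del[OF True, of W] consistent_cycle_weight_cycle_lengths(2)[OF W True \<open>1 \<le> m\<close>]
        pmf_law[OF \<open>1 \<le> m\<close>, of \<tau>] by simp
  next
    case False
    then have "{\<sigma>. \<sigma> permutes {1..Suc m} \<and> del m \<sigma> = \<tau>} = {}" using del_permutes by blast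
    then show ?thesis using False pmf_law[OF \<open>1 \<le> m\<close>, of \<tau>] by (simp only:) simp
  qed
  finally show "pmf (map_pmf (del m) (cycle_weight_law W (Suc m))) \<tau> = pmf (cycle_weight_law W m) \<tau>" .
qed

lemma consistent_cycle_weight_imp_exchangeable:
  assumes W: "consistent_cycle_weight W" and "1 \<le> n" "random_perm n P"
    and P: "\<And>\<pi>. \<pi> permutes {1..n} \<Longrightarrow> pmf P \<pi> = W (cycle_lengths n \<pi>)"
  shows "exchangeable n P"
proof -
  have "cycle_weight_law W n = P"
  proof (rule pmf_eqI)
    fix \<pi>
    show "pmf (cycle_weight_law W n) \<pi> = pmf P \<pi>"
      using P \<open>random_perm n P\<close> pmf_cycle_weight_law[OF W \<open>1 \<le> n\<close>]
      by (auto simp: random_perm_def pmf_eq_0_set_pmf)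
  qed
  then show ?thesis
    unfolding exchangeable_def
    using fin_exchangeable_cycle_weight_law[OF W] consistent_cycle_weight_law[OF W] by blast
qed

lemma exchangeable_iff_consistent_cycle_weight:
  assumes "1 \<le> n" "random_perm n P"
  shows "exchangeable n P \<longleftrightarrow> (\<exists>W. consistent_cycle_weight W \<and>
    (\<forall>\<pi>. \<pi> permutes {1..n} \<longrightarrow> pmf P \<pi> = W (cycle_lengths n \<pi>)))"
  using exchangeable_imp_consistent_cycle_weight[OF _ assms(1)]
    consistent_cycle_weight_imp_exchangeable[OF _ assms] by metis

lemma ex_EPPF_iff_ex_consistent_cycle_weight:
  assumes "1 \<le> n"
  shows "(\<exists>\<phi>. EPPF \<phi> \<and> (\<forall>\<pi> xs. \<pi> permutes {1..n} \<longrightarrow> mset xs = cycle_lengths n \<pi> \<longrightarrow>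
      pmf P \<pi> = \<phi> xs / (\<Prod>j\<leftarrow>xs. fact (j - 1)))) \<longleftrightarrow>
    (\<exists>W. consistent_cycle_weight W \<and> (\<forall>\<pi>. \<pi> permutes {1..n} \<longrightarrow> pmf P \<pi> = W (cycle_lengths n \<pi>)))"
    (is "(\<exists>\<phi>. EPPF \<phi> \<and> ?by_EPPF \<phi>) \<longleftrightarrow> (\<exists>W. consistent_cycle_weight W \<and> ?by_weight W)")
proof
  assume "\<exists>\<phi>. EPPF \<phi> \<and> ?by_EPPF \<phi>"
  then obtain \<phi> where "EPPF \<phi>" "?by_EPPF \<phi>" by blast
  obtain W where W: "consistent_cycle_weight W" and \<phi>: "\<And>xs. xs \<noteq> [] \<Longrightarrow> \<forall>x\<in>set xs. 0 < x \<Longrightarrow>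
      \<phi> xs = W (mset xs) * (\<Prod>j\<leftarrow>xs. fact (j - 1))"
    using EPPF_factorization[OF \<open>EPPF \<phi>\<close>] by blast
  have "pmf P \<pi> = W (cycle_lengths n \<pi>)" if \<pi>: "\<pi> permutes {1..n}" for \<pi>
  proof -
    obtain xs where xs: "mset xs = cycle_lengths n \<pi>" using ex_mset by blast
    then have "xs \<noteq> []" "\<forall>x\<in>set xs. 0 < x"
      using cycle_lengths_positive[OF \<pi> assms] by (auto simp flip: set_mset_mset)
    then show ?thesis using \<open>?by_EPPF \<phi>\<close> \<pi> \<phi> xs prod_fact_pos[of xs] by simp
  qed
  with W show "\<exists>W. consistent_cycle_weight W \<and> ?by_weight W" by blast
next
  assume "\<exists>W. consistent_cycle_weight W \<and> ?by_weight W"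
  then obtain W where W: "consistent_cycle_weight W" "?by_weight W" by blast
  define \<phi> where "\<phi> xs = W (mset xs) * (\<Prod>j\<leftarrow>xs. fact (j - 1))" for xs
  have "EPPF \<phi>" using EPPF_iff_consistent_cycle_weight[of \<phi> W] W(1) by (simp add: \<phi>_def)
  moreover have "?by_EPPF \<phi>"
    using W(2) prod_fact_pos[THEN less_imp_neq, THEN not_sym] by (simp add: \<phi>_def)
  ultimately show "\<exists>\<phi>. EPPF \<phi> \<and> ?by_EPPF \<phi>" by blast
qed

theorem theorem1:
  fixes n :: nat and P :: "(nat \<Rightarrow> nat) pmf"
  assumes "n \<ge> 1" and "random_perm n P"
  shows "exchangeable n P \<longleftrightarrow>
    (\<exists>\<phi>. EPPF \<phi> \<and>
       (\<forall>\<pi> xs. \<pi> permutes {1..n} \<longrightarrow> mset xs = cycle_lengths n \<pi> \<longrightarrow>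
          pmf P \<pi> = \<phi> xs / (\<Prod>j\<leftarrow>xs. fact (j - 1))))"
  using exchangeable_iff_consistent_cycle_weight[OF assms]
    ex_EPPF_iff_ex_consistent_cycle_weight[OF assms(1), of P] by simp

end
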